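(* Let $\lambda_1=\lambda_2>\lambda_3>0$ and $D=\mathrm{diag}(\lambda_1,\lambda_1,\lambda_3)$. Then: (i) $\mathrm{diag}(-1,-1,1)$ is the unique global maximum of $\widetilde W_{1,0}(\cdot;D)$ on $SO(3)$. (ii) If $\lambda_1>1$, the global minima of $\widetilde W_{1,0}(\cdot;D)$ on $SO(3)$ are exactly the two rotations $$\begin{pmatrix}\frac1{\lambda_1} & \mp\sqrt{1-\frac1{\lambda_1^2}} & 0\\ \pm\sqrt{1-\frac1{\lambda_1^2}} & \frac1{\lambda_1} & 0\\ 0&0&1\end{pmatrix}.$$ (iii) If $\lambda_1\le1$, then $\mathbb I_3$ is the unique global minimum of $\widetilde W_{1,0}(\cdot;D)$ on $SO(3)$.
   Context: $\mathrm{sym}(Y)=\tfrac12(Y+Y^T)$, $\|Y\|^2=\mathrm{tr}(Y^TY)$. $\widetilde W_{1,0}(R;D)=\|\mathrm{sym}(R^TD-\mathbb I_3)\|^2$ for $R\in SO(3)$. *)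

theory Defs
  imports "HOL-Analysis.Analysis"
begin

definition SO3 :: "(real^3^3) set" where
  "SO3 = {R. transpose R ** R = mat 1 \<and> det R = 1}"

definition msym :: "real^3^3 \<Rightarrow> real^3^3" where
  "msym Y = (1/2) *\<^sub>R (Y + transpose Y)"

definition frob_sq :: "real^3^3 \<Rightarrow> real" where
  "frob_sq Y = trace (transpose Y ** Y)"

definition W10 :: "real^3^3 \<Rightarrow> real^3^3 \<Rightarrow> real" where
  "W10 R D = frob_sq (msym (transpose R ** D - mat 1))"

definition diag3 :: "real \<Rightarrow> real \<Rightarrow> real \<Rightarrow> real^3^3" where
  "diag3 a b c = (\<chi> i j. if i = j then (if i = 1 then a else if i = 2 then b else c) else 0)"

definition rotz :: "real \<Rightarrow> real \<Rightarrow> real^3^3" where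
  "rotz c s = (\<chi> i j. if i = 1 \<and> j = 1 then c else if i = 1 \<and> j = 2 then -s
     else if i = 2 \<and> j = 1 then s else if i = 2 \<and> j = 2 then c
     else if i = 3 \<and> j = 3 then 1 else 0)"

end

theory Submission
  imports Defs "HOL-Analysis.Cross3"
begin

(* For a rotation R, each column is the cross product of the other two, i.e. R is its own
   cofactor matrix. With this, W10(R; diag(a,a,c)) turns out to depend only on P = R11 + R22 and
   z = R33, namely W10 = (c-1)^2 + 2 (aP/2 - 1 - c(1-z)/2)^2 + (1-z)(a^2-c^2), and the pairs (P, z)
   realised by rotations satisfy |P| <= 1 + z <= 2, where z = 1 forces R to be a rotation about the
   third axis by the angle with cosine P/2. For a > c > 0 this two-variable function on the triangle
   is maximal only at (P, z) = (-2, 1), i.e. at diag(-1,-1,1); it attains (c-1)^2 exactly on z = 1,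
   aP = 2 when a > 1, and is minimal only at (2, 1), the identity, when a <= 1. *)

unbundle cross3_syntax

lemma SO3_eq_rotation_matrices: "SO3 = {R. rotation_matrix R}"
  by (auto simp: SO3_def rotation_matrix_def orthogonal_matrix)

lemma rotation_matrix_diagonal_cofactors:
  fixes R :: "real^3^3"
  assumes "rotation_matrix R"
  shows "R$2$2*R$3$3 - R$2$3*R$3$2 = R$1$1" "R$3$3*R$1$1 - R$3$1*R$1$3 = R$2$2"
    "R$1$1*R$2$2 - R$1$2*R$2$1 = R$3$3"
proof -
  have "((R *v axis 2 1) \<times> (R *v axis 3 1)) $ 1 = (R *v axis 1 1) $ 1"
    "((R *v axis 3 1) \<times> (R *v axis 1 1)) $ 2 = (R *v axis 2 1) $ 2"
    "((R *v axis 1 1) \<times> (R *v axis 2 1)) $ 3 = (R *v axis 3 1) $ 3"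
    using cross_rotation_matrix[OF assms] cross_basis by metis+
  then show "R$2$2*R$3$3 - R$2$3*R$3$2 = R$1$1" "R$3$3*R$1$1 - R$3$1*R$1$3 = R$2$2"
    "R$1$1*R$2$2 - R$1$2*R$2$1 = R$3$3"
    by (simp_all add: cross_components matrix_vector_mult_basis column_def)
qed

lemma rotation_matrix_entry_relations:
  fixes R :: "real^3^3"
  assumes "rotation_matrix R"
  shows "R$1$2^2 + R$2$1^2 = 1 + R$3$3^2 - R$1$1^2 - R$2$2^2"
    "R$1$2*R$2$1 = R$1$1*R$2$2 - R$3$3"
    "R$3$1^2 + R$3$2^2 = 1 - R$3$3^2"
    "R$1$3^2 + R$2$3^2 = 1 - R$3$3^2"
    "R$1$3*R$3$1 + R$2$3*R$3$2 = (R$1$1 + R$2$2)*(R$3$3 - 1)"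
proof -
  have "transpose R ** R = mat 1" "R ** transpose R = mat 1"
    using assms by (auto simp: rotation_matrix_def orthogonal_matrix_def)
  then have "(transpose R ** R) $ i $ i = 1" "(R ** transpose R) $ i $ i = 1" for i
    by (simp_all add: mat_def)
  then have unit: "R$1$3^2 + R$2$3^2 + R$3$3^2 = 1" "R$1$1^2 + R$1$2^2 + R$1$3^2 = 1"
    "R$2$1^2 + R$2$2^2 + R$2$3^2 = 1" "R$3$1^2 + R$3$2^2 + R$3$3^2 = 1"
    by (simp_all add: matrix_matrix_mult_def transpose_def sum_3 power2_eq_square)
  note cof = rotation_matrix_diagonal_cofactors[OF assms]
  show "R$1$2^2 + R$2$1^2 = 1 + R$3$3^2 - R$1$1^2 - R$2$2^2"
    "R$3$1^2 + R$3$2^2 = 1 - R$3$3^2" "R$1$3^2 + R$2$3^2 = 1 - R$3$3^2"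
    using unit by linarith+
  show "R$1$2*R$2$1 = R$1$1*R$2$2 - R$3$3"
    using cof(3) by linarith
  show "R$1$3*R$3$1 + R$2$3*R$3$2 = (R$1$1 + R$2$2)*(R$3$3 - 1)"
    using cof(1,2) by (simp add: algebra_simps)
qed

lemma rotation_matrix_upper_trace_bound:
  fixes R :: "real^3^3"
  assumes "rotation_matrix R"
  shows "\<bar>R$1$1 + R$2$2\<bar> \<le> 1 + R$3$3" "R$3$3 \<le> 1"
proof -
  note rel = rotation_matrix_entry_relations[OF assms]
  have "(R$1$1 + R$2$2)^2 + (R$2$1 - R$1$2)^2 = (1 + R$3$3)^2"
    using rel(1,2) by (simp add: power2_eq_square algebra_simps)
  then have "(R$1$1 + R$2$2)^2 \<le> (1 + R$3$3)^2"
    by (metis le_add_same_cancel1 zero_le_power2)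
  moreover have "R$3$3^2 \<le> 1"
    using rel(4) by (metis add_nonneg_nonneg diff_ge_0_iff_ge zero_le_power2)
  ultimately show "\<bar>R$1$1 + R$2$2\<bar> \<le> 1 + R$3$3" "R$3$3 \<le> 1"
    by (auto simp: abs_le_square_iff[symmetric] abs_square_le_1 abs_le_iff)
qed

lemma rotation_matrix_eq_rotz:
  fixes R :: "real^3^3"
  assumes "rotation_matrix R" "R$3$3 = 1" "R$1$1 + R$2$2 = 2*p"
  shows "R = rotz p (R$2$1)" "p^2 + R$2$1^2 = 1"
proof -
  note rel = rotation_matrix_entry_relations[OF assms(1)]
  have "(R$1$1 - R$2$2)^2 + (R$2$1 + R$1$2)^2 = 0"
    using rel(1,2) assms(2) by (simp add: power2_eq_square algebra_simps)
  then have "R$1$1 = p" "R$2$2 = p" "R$1$2 = - R$2$1"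
    using assms(3) by (simp_all add: sum_power2_eq_zero_iff)
  moreover have "R$3$1 = 0" "R$3$2 = 0" "R$1$3 = 0" "R$2$3 = 0"
    using rel(3,4) assms(2) by (simp_all add: sum_power2_eq_zero_iff)
  ultimately show "R = rotz p (R$2$1)" "p^2 + R$2$1^2 = 1"
    using rel(1) assms(2) by (auto simp: rotz_def vec_eq_iff forall_3)
qed

lemma rotation_matrix_rotz:
  assumes "p^2 + s^2 = 1"
  shows "rotation_matrix (rotz p s)"
  using assms
  by (simp add: rotation_matrix_def orthogonal_matrix vec_eq_iff forall_3 matrix_matrix_mult_def
      transpose_def sum_3 mat_def det_3 rotz_def power2_eq_square algebra_simps)

definition reduced_energy :: "real \<Rightarrow> real \<Rightarrow> real \<Rightarrow> real \<Rightarrow> real" where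
  "reduced_energy a c P z = (c - 1)^2 + 2*(a*P/2 - 1 - c*(1 - z)/2)^2 + (1 - z)*(a^2 - c^2)"

lemma reduced_energy_ge:
  assumes "c^2 \<le> a^2" "z \<le> 1"
  shows "(c - 1)^2 \<le> reduced_energy a c P z"
  using assms unfolding reduced_energy_def by simp

lemma reduced_energy_eq_min_iff:
  assumes "c^2 < a^2" "z \<le> 1"
  shows "reduced_energy a c P z = (c - 1)^2 \<longleftrightarrow> z = 1 \<and> a*P = 2"
proof -
  have "0 \<le> (1 - z)*(a^2 - c^2)"
    using assms by simp
  then have "reduced_energy a c P z = (c - 1)^2 \<longleftrightarrow>
      (a*P/2 - 1 - c*(1 - z)/2)^2 = 0 \<and> (1 - z)*(a^2 - c^2) = 0"
    unfolding reduced_energy_def by (simp add: add_nonneg_eq_0_iff)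
  also have "\<dots> \<longleftrightarrow> z = 1 \<and> a*P = 2"
    using assms by auto
  finally show ?thesis .
qed

lemma reduced_energy_strict_min_at_2_1:
  assumes "0 \<le> c" "c < a" "a \<le> 1" "P \<le> 1 + z" "z \<le> 1" "(P, z) \<noteq> (2, 1)"
  shows "reduced_energy a c 2 1 < reduced_energy a c P z"
proof -
  define y where "y = a*P/2 - 1 - c*(1 - z)/2"
  have "a*P \<le> a*(1 + z)" "a*(1 + z) \<le> a*2" "0 \<le> c*(1 - z)"
    using assms by (simp_all add: mult_left_mono)
  then have "y \<le> a - 1"
    unfolding y_def by linarith
  then have y2: "(a - 1)^2 \<le> y^2"
    using assms by (simp add: abs_le_square_iff[symmetric])
  have T: "0 \<le> (1 - z)*(a^2 - c^2)"
    using assms by simp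
  have red: "reduced_energy a c P z = (c - 1)^2 + 2*y^2 + (1 - z)*(a^2 - c^2)"
    "reduced_energy a c 2 1 = (c - 1)^2 + 2*(a - 1)^2"
    unfolding reduced_energy_def y_def by simp_all
  show ?thesis
  proof (cases "z = 1")
    case True
    then have "P < 2" using assms by auto
    then have "y < a - 1" using assms True unfolding y_def by simp
    then have "(a - 1)^2 < y^2" using assms abs_le_square_iff[of y "a - 1"] by auto
    then show ?thesis using red T by linarith
  next
    case False
    then have "0 < (1 - z)*(a^2 - c^2)"
      using assms by (simp add: power_strict_mono)
    then show ?thesis using red y2 by linarith
  qed
qed

lemma reduced_energy_strict_max_at_minus_2_1:
  assumes "0 \<le> c" "c < a" "\<bar>P\<bar> \<le> 1 + z" "z \<le> 1" "(P, z) \<noteq> (-2, 1)"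
  shows "reduced_energy a c P z < reduced_energy a c (-2) 1"
proof -
  define w where "w = 1 - z"
  define y where "y = a*P/2 - 1 - c*w/2"
  \<comment> \<open>\<open>K\<close> bounds \<open>|y|\<close> on the admissible triangle \<open>|P| \<le> 2 - w\<close>\<close>
  define K where "K = a + 1 - w*(a - c)/2"
  have w: "0 \<le> w" "w \<le> 2"
    using assms unfolding w_def by auto
  have "\<bar>a*P\<bar> \<le> a*(2 - w)"
    using assms unfolding w_def by (simp add: abs_mult mult_left_mono)
  moreover have "0 \<le> c*w"
    using assms w by simp
  ultimately have y_bound: "-K \<le> y" "y \<le> K - 2 - c*w"
    unfolding y_def K_def abs_le_iff by (simp_all add: field_simps)
  have wac: "w*(a - c)/2 \<le> a - c"
    using w assms mult_right_mono[of w 2 "a - c"] by simp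
  then have "0 \<le> K"
    using assms unfolding K_def by linarith
  then have y2: "y^2 \<le> K^2"
    using y_bound \<open>0 \<le> c*w\<close> abs_le_square_iff[of y K] by auto
  define Q where "Q = w*(a - c)*(a - c + 2 - w*(a - c)/2)"
  have gap: "reduced_energy a c (-2) 1 = reduced_energy a c P z + 2*(K^2 - y^2) + Q"
    unfolding reduced_energy_def y_def K_def w_def Q_def by (simp add: power2_eq_square field_simps)
  have "2 \<le> a - c + 2 - w*(a - c)/2"
    using wac by linarith
  show ?thesis
  proof (cases "w = 0")
    case True
    then have "-2 < P"
      using assms unfolding w_def by auto
    then have "a*(-2) < a*P"
      using assms by (intro mult_strict_left_mono) auto
    then have "-K < y"
      using True unfolding y_def K_def by simp
    then have "0 < K^2 - y^2"
      using y_bound \<open>0 \<le> c*w\<close> abs_le_square_iff[of K y] by auto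
    moreover have "Q = 0"
      using True unfolding Q_def by simp
    ultimately show ?thesis
      using gap by (smt (verit))
  next
    case False
    then have "0 < Q"
      unfolding Q_def using w assms \<open>2 \<le> a - c + 2 - w*(a - c)/2\<close> by simp
    then show ?thesis
      using gap y2 by (smt (verit))
  qed
qed

lemma W10_diag3_expand:
  "W10 R (diag3 a a c) = (c*R$3$3 - 1)^2 + (a*R$1$1 - 1)^2 + (a*R$2$2 - 1)^2
     + a^2*(R$1$2 + R$2$1)^2/2 + ((a*R$1$3 + c*R$3$1)^2 + (a*R$2$3 + c*R$3$2)^2)/2"
  unfolding W10_def frob_sq_def msym_def trace_def diag3_def
  by (simp add: matrix_matrix_mult_def transpose_def sum_3 mat_def power2_eq_square
      algebra_simps divide_simps)

lemma W10_diag3_rotation: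
  fixes R :: "real^3^3"
  assumes "rotation_matrix R"
  shows "W10 R (diag3 a a c) = reduced_energy a c (R$1$1 + R$2$2) (R$3$3)"
proof -
  note rel = rotation_matrix_entry_relations[OF assms]
  have "W10 R (diag3 a a c) = (c*R$3$3 - 1)^2 + a^2*(R$1$1^2 + R$2$2^2) - 2*a*(R$1$1 + R$2$2) + 2
      + a^2*(R$1$2^2 + R$2$1^2)/2 + a^2*(R$1$2*R$2$1)
      + (a^2*(R$1$3^2 + R$2$3^2) + c^2*(R$3$1^2 + R$3$2^2) + 2*a*c*(R$1$3*R$3$1 + R$2$3*R$3$2))/2"
    unfolding W10_diag3_expand by (simp add: power2_eq_square algebra_simps)
  also have "\<dots> = reduced_energy a c (R$1$1 + R$2$2) (R$3$3)"
    unfolding rel reduced_energy_def by (simp add: power2_eq_square field_simps)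
  finally show ?thesis .
qed

lemma W10_rotz:
  assumes "p^2 + s^2 = 1"
  shows "W10 (rotz p s) (diag3 a a c) = reduced_energy a c (2*p) 1"
  using W10_diag3_rotation[OF rotation_matrix_rotz[OF assms]] by (simp add: rotz_def)

lemma diag3_eq_rotz: "diag3 (-1) (-1) 1 = rotz (-1) 0" "mat 1 = rotz 1 0"
  by (simp_all add: vec_eq_iff forall_3 diag3_def rotz_def mat_def)

lemma W10_diag3_strict_max:
  fixes R :: "real^3^3"
  assumes "0 \<le> c" "c < a" "rotation_matrix R" "R \<noteq> rotz (-1) 0"
  shows "W10 R (diag3 a a c) < W10 (rotz (-1) 0) (diag3 a a c)"
proof -
  have "(R$1$1 + R$2$2, R$3$3) \<noteq> (-2, 1)"
  proof
    assume "(R$1$1 + R$2$2, R$3$3) = (-2, 1)"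
    then have "R = rotz (-1) (R$2$1)" "R$2$1 = 0"
      using rotation_matrix_eq_rotz[OF assms(3), of "-1"] by auto
    then show False
      using assms(4) by simp
  qed
  then show ?thesis
    using reduced_energy_strict_max_at_minus_2_1[OF assms(1,2)
        rotation_matrix_upper_trace_bound[OF assms(3)]]
    by (simp add: W10_diag3_rotation[OF assms(3)] W10_rotz)
qed

lemma W10_diag3_strict_min_at_identity:
  fixes R :: "real^3^3"
  assumes "0 \<le> c" "c < a" "a \<le> 1" "rotation_matrix R" "R \<noteq> rotz 1 0"
  shows "W10 (rotz 1 0) (diag3 a a c) < W10 R (diag3 a a c)"
proof -
  have "(R$1$1 + R$2$2, R$3$3) \<noteq> (2, 1)"
  proof
    assume "(R$1$1 + R$2$2, R$3$3) = (2, 1)"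
    then have "R = rotz 1 (R$2$1)" "R$2$1 = 0"
      using rotation_matrix_eq_rotz[OF assms(4), of 1] by auto
    then show False
      using assms(5) by simp
  qed
  moreover note bound = rotation_matrix_upper_trace_bound[OF assms(4)]
  ultimately show ?thesis
    using reduced_energy_strict_min_at_2_1[OF assms(1-3) abs_le_D1[OF bound(1)] bound(2)]
    by (simp add: W10_diag3_rotation[OF assms(4)] W10_rotz)
qed

lemma W10_diag3_minimizers:
  assumes "0 \<le> c" "c < a" "1 < a"
  shows "{R. rotation_matrix R \<and>
      (\<forall>S. rotation_matrix S \<longrightarrow> W10 R (diag3 a a c) \<le> W10 S (diag3 a a c))}
    = {rotz (1/a) (sqrt (1 - 1/a^2)), rotz (1/a) (- sqrt (1 - 1/a^2))}"
    (is "?Min = {rotz (1/a) ?s, rotz (1/a) (- ?s)}")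
proof -
  have ca: "c^2 < a^2"
    using assms by (simp add: power_strict_mono)
  have "?s^2 = 1 - (1/a)^2"
    using assms by (simp add: power_divide)
  then have s: "(1/a)^2 + t^2 = 1 \<longleftrightarrow> t = ?s \<or> t = - ?s" for t
    using power2_eq_iff[of t ?s] by auto
  have lower: "(c - 1)^2 \<le> W10 S (diag3 a a c)" if "rotation_matrix S" for S
    using reduced_energy_ge[OF less_imp_le[OF ca]] rotation_matrix_upper_trace_bound[OF that]
    by (simp add: W10_diag3_rotation[OF that])
  have attained: "W10 (rotz (1/a) t) (diag3 a a c) = (c - 1)^2" if "(1/a)^2 + t^2 = 1" for t
    using reduced_energy_eq_min_iff[OF ca] assms by (simp add: W10_rotz[OF that])
  show ?thesis
  proof (intro equalityI subsetI)
    fix R assume "R \<in> {rotz (1/a) ?s, rotz (1/a) (- ?s)}"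
    then show "R \<in> ?Min"
      using s[of ?s] s[of "- ?s"] rotation_matrix_rotz attained lower by auto
  next
    fix R assume "R \<in> ?Min"
    then have R: "rotation_matrix R" "W10 R (diag3 a a c) \<le> (c - 1)^2"
      using s[of ?s] rotation_matrix_rotz attained by fastforce+
    then have "reduced_energy a c (R$1$1 + R$2$2) (R$3$3) = (c - 1)^2"
      using lower[of R] by (simp add: W10_diag3_rotation)
    then have "R$3$3 = 1" "R$1$1 + R$2$2 = 2*(1/a)"
      using reduced_energy_eq_min_iff[OF ca] rotation_matrix_upper_trace_bound[OF R(1)] assms
      by (auto simp: field_simps)
    then show "R \<in> {rotz (1/a) ?s, rotz (1/a) (- ?s)}"
      using rotation_matrix_eq_rotz[OF R(1)] s by (metis insertCI)
  qed
qed

theorem mainTheorem10: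
  fixes l1 l3 :: real
  assumes "l1 > l3" and "l3 > 0"
  shows "(diag3 (-1) (-1) 1 \<in> SO3 \<and>
           (\<forall>R\<in>SO3. R \<noteq> diag3 (-1) (-1) 1 \<longrightarrow>
              W10 R (diag3 l1 l1 l3) < W10 (diag3 (-1) (-1) 1) (diag3 l1 l1 l3)))
       \<and> (l1 > 1 \<longrightarrow>
           {R \<in> SO3. \<forall>S\<in>SO3. W10 R (diag3 l1 l1 l3) \<le> W10 S (diag3 l1 l1 l3)} =
           {rotz (1/l1) (sqrt (1 - 1/l1^2)), rotz (1/l1) (- sqrt (1 - 1/l1^2))})
       \<and> (l1 \<le> 1 \<longrightarrow>
           mat 1 \<in> SO3 \<and> (\<forall>R\<in>SO3. R \<noteq> mat 1 \<longrightarrow>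
              W10 (mat 1) (diag3 l1 l1 l3) < W10 R (diag3 l1 l1 l3)))"
  using assms W10_diag3_strict_max[of l3 l1] W10_diag3_minimizers[of l3 l1]
    W10_diag3_strict_min_at_identity[of l3 l1]
    rotation_matrix_rotz[of 1 0] rotation_matrix_rotz[of "-1" 0]
  by (simp add: SO3_eq_rotation_matrices diag3_eq_rotz)

end
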